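(* Let $N\ge1$, $f:\mathbb{N}^N\to\mathbb{N}$, $p$ a prime and $\boldsymbol{\ell}\in\mathbb{N}^N$. Then $\binom{p}{\boldsymbol{\ell}}_f\equiv f(\mathbf{m})\pmod p$ if $\boldsymbol{\ell}=p\mathbf{m}$ for some $\mathbf{m}\in\mathbb{N}^N$, and $\binom{p}{\boldsymbol{\ell}}_f\equiv0\pmod p$ otherwise.
   Context: $\mathbb{N}=\{0,1,2,\dots\}$. For $k\ge0$ and $\mathbf{x}\in\mathbb{N}^N$, $\binom{k}{\mathbf{x}}_f=\sum_{\mathbf{m}_1+\cdots+\mathbf{m}_k=\mathbf{x}} f(\mathbf{m}_1)\cdots f(\mathbf{m}_k)$ over tuples of vectors in $\mathbb{N}^N$. *)

theory Defs
  imports "HOL-Analysis.Analysis" "HOL-Number_Theory.Number_Theory"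
begin

text \<open>Vectors in N^N are modelled as functions nat => nat vanishing outside {..<N}.\<close>
definition vecs :: "nat \<Rightarrow> (nat \<Rightarrow> nat) set" where
  "vecs N = {v. \<forall>j. N \<le> j \<longrightarrow> v j = 0}"

definition compositions :: "nat \<Rightarrow> nat \<Rightarrow> (nat \<Rightarrow> nat) \<Rightarrow> (nat \<Rightarrow> nat \<Rightarrow> nat) set" where
  "compositions N k x =
     {ms. ms \<in> {..<k} \<rightarrow>\<^sub>E vecs N \<and> (\<lambda>j. \<Sum>i<k. ms i j) = x}"

definition fbinom :: "nat \<Rightarrow> ((nat \<Rightarrow> nat) \<Rightarrow> nat) \<Rightarrow> nat \<Rightarrow> (nat \<Rightarrow> nat) \<Rightarrow> nat" where
  "fbinom N f k x = (\<Sum>ms\<in>compositions N k x. \<Prod>i<k. f (ms i))"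

end

theory Submission
  imports Defs "HOL-Combinatorics.Orbits"
begin

text \<open>The cyclic rotation of a p-tuple of vectors maps the compositions of l into p parts
  to themselves and preserves the weight f(m_0) \<dots> f(m_{p-1}). Its p-th power is the identity, so
  for prime p every orbit is a single point or has exactly p elements; the orbits of size p
  contribute multiples of p. What remains are the constant tuples (m, \<dots>, m), which exist
  only when l = p m and then contribute f(m)^p \<equiv> f(m) (mod p) by Fermat.\<close>

lemma card_orbit_prime_period:
  assumes "prime p" and "(g ^^ p) x = x" and "g x \<noteq> x"
  shows "card (orbit g x) = p"
proof -
  define d where "d = funpow_dist1 g x x"
  have x_in: "x \<in> orbit g x"
    unfolding orbit_altdef using assms(2) prime_gt_0_nat[OF assms(1)] by force
  have period: "(g ^^ d) x = x"
    unfolding d_def by (rule funpow_dist1_prop[OF x_in])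
  have "d dvd p"
  proof (rule ccontr)
    assume "\<not> d dvd p"
    then have "0 < p mod d" "p mod d < d"
      using d_def by (auto simp: mod_greater_zero_iff_not_dvd)
    moreover have "(g ^^ (p mod d)) x = x"
      using funpow_mod_eq[OF period, of p] assms(2) by simp
    ultimately show False
      using funpow_dist1_least[of "p mod d" g x x] d_def by simp
  qed
  moreover have "d \<noteq> 1" using period assms(3) by auto
  ultimately have "d = p" using assms(1) by (auto simp: prime_nat_iff)
  moreover have "card (orbit g x) = d"
    unfolding orbit_conv_funpow_dist1[OF x_in] d_def
    using inj_on_funpow_dist1[OF x_in] by (simp add: card_image)
  ultimately show ?thesis by simp
qed

lemma orbit_subset_invariant:
  assumes "x \<in> S" and "g ` S \<subseteq> S"
  shows "orbit g x \<subseteq> S"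
proof
  fix y assume "y \<in> orbit g x"
  then show "y \<in> S" using assms by induction auto
qed

lemma orbit_eq_if_in_orbit:
  assumes "x \<in> orbit g x" and "y \<in> orbit g x"
  shows "orbit g y = orbit g x"
  using assms orbit_swap orbit_trans by (metis subsetI subset_antisym)

lemma invariant_const_on_orbit:
  assumes "x \<in> S" and "g ` S \<subseteq> S" and "\<And>y. y \<in> S \<Longrightarrow> w (g y) = w y"
    and "y \<in> orbit g x"
  shows "w y = w x"
  using assms(4)
proof induction
  case base
  then show ?case using assms(1,3) by simp
next
  case (step y)
  then have "y \<in> S" using orbit_subset_invariant[OF assms(1,2)] by blast
  then show ?case using step.IH assms(3) by simp
qed

lemma sum_cong_fixed_points_mod_prime:
  fixes w :: "'a \<Rightarrow> nat"
  assumes "prime p" and "finite S" and "g ` S \<subseteq> S"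
    and "\<And>x. x \<in> S \<Longrightarrow> (g ^^ p) x = x" and "\<And>x. x \<in> S \<Longrightarrow> w (g x) = w x"
  shows "[sum w S = sum w {x\<in>S. g x = x}] (mod p)"
proof -
  define T where "T = {x\<in>S. g x \<noteq> x}"
  have self_in: "x \<in> orbit g x" if "x \<in> S" for x
    unfolding orbit_altdef using assms(4)[OF that] prime_gt_0_nat[OF assms(1)] by force
  have orbit_fibre: "{y\<in>T. orbit g y = orbit g x} = orbit g x" if "x \<in> T" for x
  proof -
    have x: "x \<in> S" "g x \<noteq> x" using that T_def by auto
    have "y \<in> T" if y: "y \<in> orbit g x" for y
    proof -
      have "y \<in> S" using orbit_subset_invariant[OF x(1) assms(3)] y by blast
      moreover have "x \<in> orbit g y" by (rule orbit_swap[OF self_in[OF x(1)] y])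
      then have "g y \<noteq> y" using x(2) orbit_eq_singleton_iff[of g y] by (metis singletonD)
      ultimately show "y \<in> T" unfolding T_def by simp
    qed
    moreover have "orbit g y = orbit g x" if "y \<in> orbit g x" for y
      by (rule orbit_eq_if_in_orbit[OF self_in[OF x(1)] that])
    moreover have "y \<in> orbit g x" if "y \<in> T" "orbit g y = orbit g x" for y
      using self_in[of y] that unfolding T_def by simp
    ultimately show ?thesis by blast
  qed
  have orbit_sum: "p dvd sum w (orbit g x)" if "x \<in> T" for x
  proof -
    have x: "x \<in> S" "g x \<noteq> x" using that T_def by auto
    have "sum w (orbit g x) = (\<Sum>y\<in>orbit g x. w x)"
      using invariant_const_on_orbit[of x S g w, OF x(1) assms(3) assms(5)]
    by (rule sum.cong[OF refl])
    also have "\<dots> = p * w x"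
      using card_orbit_prime_period[OF assms(1) assms(4)[OF x(1)] x(2)] by simp
    finally show ?thesis by simp
  qed
  have "sum w T = (\<Sum>C\<in>orbit g ` T. sum w {y\<in>T. orbit g y = C})"
    using assms(2) unfolding T_def by (intro sum.image_gen) simp
  also have "p dvd \<dots>"
  proof (rule dvd_sum)
    fix C assume "C \<in> orbit g ` T"
    then obtain x where "x \<in> T" "C = orbit g x" by blast
    then show "p dvd sum w {y\<in>T. orbit g y = C}"
      using orbit_fibre orbit_sum by metis
  qed
  finally have "p dvd sum w T" .
  moreover have "sum w S = sum w {x\<in>S. g x = x} + sum w T"
    unfolding T_def using assms(2) by (subst sum.union_disjoint[symmetric]) (auto intro: sum.cong)
  ultimately show ?thesis by (simp add: cong_def mod_add_right_eq[symmetric])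
qed

definition rotate_tuple :: "nat \<Rightarrow> (nat \<Rightarrow> 'a) \<Rightarrow> nat \<Rightarrow> 'a" where
  "rotate_tuple k ms = (\<lambda>i\<in>{..<k}. ms (Suc i mod k))"

lemma bij_betw_Suc_mod: "bij_betw (\<lambda>i. Suc i mod k) {..<k} {..<k}"
proof (cases "k = 0")
  case False
  have "inj_on (\<lambda>i. Suc i mod k) {..<k}"
    by (auto simp: inj_on_def mod_Suc split: if_splits)
  moreover have "(\<lambda>i. Suc i mod k) ` {..<k} \<subseteq> {..<k}" using False by auto
  ultimately show ?thesis by (simp add: bij_betw_def endo_inj_surj)
qed simp

lemma funpow_rotate_tuple:
  assumes "ms \<in> extensional {..<k}"
  shows "(rotate_tuple k ^^ n) ms = (\<lambda>i\<in>{..<k}. ms ((i + n) mod k))"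
proof (induction n)
  case 0
  then show ?case using assms by (auto simp: extensional_def)
next
  case (Suc n)
  have "(rotate_tuple k ^^ Suc n) ms = rotate_tuple k ((rotate_tuple k ^^ n) ms)"
    by simp
  also have "\<dots> = (\<lambda>i\<in>{..<k}. ms ((i + Suc n) mod k))"
    unfolding Suc.IH rotate_tuple_def by (auto simp: mod_add_left_eq)
  finally show ?case .
qed

lemma funpow_rotate_tuple_self:
  assumes "ms \<in> extensional {..<k}"
  shows "(rotate_tuple k ^^ k) ms = ms"
proof
  fix i
  show "(rotate_tuple k ^^ k) ms i = ms i"
    unfolding funpow_rotate_tuple[OF assms] using assms
    by (cases "i < k") (auto simp: extensional_def)
qed

lemma rotate_tuple_fixed_iff:
  assumes "ms \<in> extensional {..<k}"
  shows "rotate_tuple k ms = ms \<longleftrightarrow> ms = (\<lambda>i\<in>{..<k}. ms 0)"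
proof
  assume fixed: "rotate_tuple k ms = ms"
  have const: "ms i = ms 0" if "i < k" for i
    using that
  proof (induction i)
    case (Suc i)
    have "ms (Suc i) = rotate_tuple k ms i"
      using Suc.prems by (simp add: rotate_tuple_def)
    also have "\<dots> = ms i"
      by (simp only: fixed)
    also have "\<dots> = ms 0"
      using Suc by simp
    finally show ?case .
  qed simp
  show "ms = (\<lambda>i\<in>{..<k}. ms 0)"
  proof
    fix i
    show "ms i = (\<lambda>i\<in>{..<k}. ms 0) i"
      using const[of i] assms by (cases "i < k") (simp_all add: extensional_def)
  qed
next
  assume const: "ms = (\<lambda>i\<in>{..<k}. ms 0)"
  have const_on: "ms j = ms 0" if "j < k" for j
    using fun_cong[OF const, of j] that by simp
  show "rotate_tuple k ms = ms"
  proof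
    fix i
    show "rotate_tuple k ms i = ms i"
    proof (cases "i < k")
      case True
      then have "rotate_tuple k ms i = ms (Suc i mod k)"
        by (simp add: rotate_tuple_def)
      also have "\<dots> = ms 0"
        using True by (intro const_on) simp
      also have "\<dots> = ms i"
        using True by (intro const_on[symmetric])
      finally show ?thesis .
    next
      case False
      then show ?thesis using assms by (simp add: rotate_tuple_def extensional_def)
    qed
  qed
qed

lemma sum_rotate_tuple: "(\<Sum>i<k. h (rotate_tuple k ms i)) = (\<Sum>i<k. h (ms i))"
  using sum.reindex_bij_betw[OF bij_betw_Suc_mod, of "\<lambda>i. h (ms i)"]
  by (simp add: rotate_tuple_def)

lemma prod_rotate_tuple: "(\<Prod>i<k. h (rotate_tuple k ms i)) = (\<Prod>i<k. h (ms i))"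
  using prod.reindex_bij_betw[OF bij_betw_Suc_mod, of "\<lambda>i. h (ms i)"]
  by (simp add: rotate_tuple_def)

lemma rotate_tuple_in_compositions:
  assumes "ms \<in> compositions N k x"
  shows "rotate_tuple k ms \<in> compositions N k x"
proof -
  have ms: "ms \<in> {..<k} \<rightarrow>\<^sub>E vecs N" "(\<lambda>j. \<Sum>i<k. ms i j) = x"
    using assms by (simp_all add: compositions_def)
  have "rotate_tuple k ms \<in> {..<k} \<rightarrow>\<^sub>E vecs N"
    using ms(1) unfolding rotate_tuple_def restrict_PiE_iff by (simp add: PiE_iff)
  moreover have "(\<lambda>j. \<Sum>i<k. rotate_tuple k ms i j) = x"
    unfolding sum_rotate_tuple[of "\<lambda>v. v _"] by (rule ms(2))
  ultimately show ?thesis by (simp add: compositions_def)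
qed

lemma constant_tuple_in_compositions_iff:
  assumes "0 < k"
  shows "(\<lambda>i\<in>{..<k}. m) \<in> compositions N k x \<longleftrightarrow> m \<in> vecs N \<and> x = (\<lambda>j. k * m j)"
proof -
  have "(\<lambda>i\<in>{..<k}. m) \<in> {..<k} \<rightarrow>\<^sub>E vecs N \<longleftrightarrow> m \<in> vecs N"
    unfolding restrict_PiE_iff using assms by blast
  moreover have "(\<Sum>i<k. (\<lambda>i\<in>{..<k}. m) i j) = k * m j" for j
    by simp
  ultimately show ?thesis
    unfolding compositions_def by (simp add: eq_commute)
qed

lemma rotation_fixed_compositions:
  assumes "0 < k"
  shows "{ms \<in> compositions N k x. rotate_tuple k ms = ms}
           = (\<lambda>m. \<lambda>i\<in>{..<k}. m) ` {m \<in> vecs N. x = (\<lambda>j. k * m j)}"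
proof (rule equalityI; rule subsetI)
  fix ms assume "ms \<in> {ms \<in> compositions N k x. rotate_tuple k ms = ms}"
  then have ms: "ms \<in> compositions N k x" "rotate_tuple k ms = ms" by simp_all
  then have "ms \<in> extensional {..<k}"
    by (simp add: compositions_def PiE_iff)
  then have "ms = (\<lambda>i\<in>{..<k}. ms 0)"
    using ms(2) rotate_tuple_fixed_iff by blast
  then show "ms \<in> (\<lambda>m. \<lambda>i\<in>{..<k}. m) ` {m \<in> vecs N. x = (\<lambda>j. k * m j)}"
    using ms(1) constant_tuple_in_compositions_iff[OF assms, of "ms 0" N x]
    by (metis (mono_tags) image_eqI mem_Collect_eq)
next
  fix ms assume "ms \<in> (\<lambda>m. \<lambda>i\<in>{..<k}. m) ` {m \<in> vecs N. x = (\<lambda>j. k * m j)}"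
  then obtain m where m: "m \<in> vecs N" "x = (\<lambda>j. k * m j)" and ms: "ms = (\<lambda>i\<in>{..<k}. m)"
    by blast
  have "rotate_tuple k ms = ms"
    unfolding ms rotate_tuple_fixed_iff[OF restrict_extensional] using assms by simp
  then show "ms \<in> {ms \<in> compositions N k x. rotate_tuple k ms = ms}"
    using constant_tuple_in_compositions_iff[OF assms] m ms by simp
qed

lemma finite_bounded_vecs: "finite {v \<in> vecs N. \<forall>j. v j \<le> x j}"
proof (rule finite_subset)
  let ?M = "\<Sum>j<N. x j"
  show "{v \<in> vecs N. \<forall>j. v j \<le> x j}
          \<subseteq> {v. \<forall>j. (j \<in> {..<N} \<longrightarrow> v j \<in> {..?M}) \<and> (j \<notin> {..<N} \<longrightarrow> v j = 0)}"
  proof (rule subsetI, unfold mem_Collect_eq, intro allI conjI impI)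
    fix v j assume v: "v \<in> vecs N \<and> (\<forall>j. v j \<le> x j)"
    show "v j = 0" if "j \<notin> {..<N}" using v that by (simp add: vecs_def)
    show "v j \<in> {..?M}" if "j \<in> {..<N}"
      using v member_le_sum[of j "{..<N}" x] that by (auto intro: order_trans)
  qed
qed (rule finite_set_of_finite_funs; simp)

lemma finite_compositions: "finite (compositions N k x)"
proof (rule finite_subset)
  show "compositions N k x \<subseteq> {..<k} \<rightarrow>\<^sub>E {v \<in> vecs N. \<forall>j. v j \<le> x j}"
  proof
    fix ms assume "ms \<in> compositions N k x"
    then have ms: "ms \<in> {..<k} \<rightarrow>\<^sub>E vecs N" "\<And>j. (\<Sum>i<k. ms i j) = x j"
      by (auto simp: compositions_def)
    have "ms i j \<le> x j" if "i < k" for i j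
      using member_le_sum[of i "{..<k}" "\<lambda>i. ms i j"] that ms(2)[of j] by simp
    then show "ms \<in> {..<k} \<rightarrow>\<^sub>E {v \<in> vecs N. \<forall>j. v j \<le> x j}"
      using ms(1) by (auto simp: PiE_iff)
  qed
  show "finite ({..<k} \<rightarrow>\<^sub>E {v \<in> vecs N. \<forall>j. v j \<le> x j})"
    by (intro finite_PiE finite_bounded_vecs) simp
qed

lemma cong_pow_prime_self:
  fixes a :: nat
  assumes "prime p"
  shows "[a ^ p = a] (mod p)"
proof -
  have a_pow: "a ^ p = a * a ^ (p - 1)"
    using prime_gt_0_nat[OF assms] by (simp add: power_eq_if)
  show ?thesis
  proof (cases "p dvd a")
    case True
    then show ?thesis by (simp add: a_pow cong_def)
  next
    case False
    then have "[a * a ^ (p - 1) = a * 1] (mod p)"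
      using fermat_theorem[OF assms] by (intro cong_mult) auto
    then show ?thesis by (simp add: a_pow)
  qed
qed

theorem theorem6:
  fixes N p :: nat and f :: "(nat \<Rightarrow> nat) \<Rightarrow> nat" and l :: "nat \<Rightarrow> nat"
  assumes "N \<ge> 1" and "prime p" and "l \<in> vecs N"
  shows "(\<forall>m\<in>vecs N. l = (\<lambda>j. p * m j) \<longrightarrow> [fbinom N f p l = f m] (mod p))
       \<and> ((\<not> (\<exists>m\<in>vecs N. l = (\<lambda>j. p * m j))) \<longrightarrow> [fbinom N f p l = 0] (mod p))"
proof -
  define w where "w ms = (\<Prod>i<p. f (ms i))" for ms :: "nat \<Rightarrow> nat \<Rightarrow> nat"
  define M where "M = {m \<in> vecs N. l = (\<lambda>j. p * m j)}"
  have p_pos: "0 < p" using prime_gt_0_nat[OF assms(2)] .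
  have "[fbinom N f p l = sum w {ms \<in> compositions N p l. rotate_tuple p ms = ms}] (mod p)"
    unfolding fbinom_def w_def
  proof (rule sum_cong_fixed_points_mod_prime[OF assms(2) finite_compositions])
    fix ms assume "ms \<in> compositions N p l"
    then show "(rotate_tuple p ^^ p) ms = ms"
      by (intro funpow_rotate_tuple_self) (simp add: compositions_def PiE_iff)
  qed (auto simp: rotate_tuple_in_compositions prod_rotate_tuple)
  then have fbinom_cong: "[fbinom N f p l = sum w ((\<lambda>m. \<lambda>i\<in>{..<p}. m) ` M)] (mod p)"
    unfolding M_def rotation_fixed_compositions[OF p_pos] .
  show ?thesis
  proof (intro conjI ballI impI)
    fix m assume "m \<in> vecs N" "l = (\<lambda>j. p * m j)"
    then have "M = {m}"
      using p_pos unfolding M_def by (auto simp: fun_eq_iff)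
    moreover have "w (\<lambda>i\<in>{..<p}. m) = f m ^ p"
      by (simp add: w_def)
    ultimately show "[fbinom N f p l = f m] (mod p)"
      using fbinom_cong cong_pow_prime_self[OF assms(2)] by (auto intro: cong_trans)
  next
    assume "\<not> (\<exists>m\<in>vecs N. l = (\<lambda>j. p * m j))"
    then have "M = {}" unfolding M_def by blast
    then show "[fbinom N f p l = 0] (mod p)" using fbinom_cong by simp
  qed
qed

end
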